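(* Let $(X,d,\kappa)$ be a digital metric space where $X$ is finite or $d$ is an $\ell_p$ metric for some $1\le p\le\infty$. Let $T:X\to X$ and $\alpha:X\times X\to[0,\infty)$. Suppose (1) $T$ is $\alpha$-admissible; (2) there exists $x_0\in X$ with $\alpha(x_0,T(x_0))\ge1$; and (3) there exist $\psi,\phi\in\Phi$ such that for all $x,y\in X$, \[\alpha(x,y)\,\psi(d(T(x),T(y)))\le\psi(M(x,y))-\phi(M(x,y)),\] where $M(x,y)=\max\{d(x,y),\ d(x,T(x)),\ d(y,T(y)),\ [d(x,T(y))+d(y,T(x))]/2\}$. Then $T$ has a fixed point. Further, if $u$ and $v$ are fixed points of $T$ with $\alpha(u,v)\ge1$, then $u=v$.
   Context: A digital metric space is a triple $(X,d,\kappa)$ where $X\subset\mathbb{Z}^n$ for some positive integer $n$, $\kappa$ is an adjacency relation on $X$, and $d$ is a metric on $X$. The $\ell_p$ metric on $\mathbb{Z}^n$ is $d(x,y)=(\sum_i|x_i-y_i|^p)^{1/p}$ for $1\le p<\infty$ and $\max_i|x_i-y_i|$ for $p=\infty$. $\Phi$ is the set of functions $\phi:[0,\infty)\to[0,\infty)$ that are increasing, satisfy $\phi(t)=0$ iff $t=0$, and $\phi(t)<t$ for $t>0$. $T$ is $\alpha$-admissible if $\alpha(x,y)\ge1$ implies $\alpha(T(x),T(y))\ge1$. *)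

theory Defs
  imports "HOL-Analysis.Analysis"
begin

definition metric_on :: "('a set) \<Rightarrow> ('a \<Rightarrow> 'a \<Rightarrow> real) \<Rightarrow> bool" where
  "metric_on X d \<longleftrightarrow>
     (\<forall>x\<in>X. \<forall>y\<in>X. d x y \<ge> 0 \<and> (d x y = 0 \<longleftrightarrow> x = y) \<and> d x y = d y x) \<and>
     (\<forall>x\<in>X. \<forall>y\<in>X. \<forall>z\<in>X. d x z \<le> d x y + d y z)"

definition adjacency_on :: "('a set) \<Rightarrow> ('a \<Rightarrow> 'a \<Rightarrow> bool) \<Rightarrow> bool" where
  "adjacency_on X \<kappa> \<longleftrightarrow> (\<forall>x y. \<kappa> x y \<longrightarrow> x \<in> X \<and> y \<in> X \<and> x \<noteq> y \<and> \<kappa> y x)"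

definition digital_metric_space ::
  "(int ^ 'n) set \<Rightarrow> (int ^ 'n \<Rightarrow> int ^ 'n \<Rightarrow> real) \<Rightarrow> (int ^ 'n \<Rightarrow> int ^ 'n \<Rightarrow> bool) \<Rightarrow> bool" where
  "digital_metric_space X d \<kappa> \<longleftrightarrow> metric_on X d \<and> adjacency_on X \<kappa>"

definition lp_dist :: "real \<Rightarrow> int ^ 'n \<Rightarrow> int ^ 'n \<Rightarrow> real" where
  "lp_dist p x y = (\<Sum>i\<in>UNIV. \<bar>real_of_int (x $ i - y $ i)\<bar> powr p) powr (1 / p)"

definition linf_dist :: "int ^ 'n \<Rightarrow> int ^ 'n \<Rightarrow> real" where
  "linf_dist x y = Max (range (\<lambda>i. \<bar>real_of_int (x $ i - y $ i)\<bar>))"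

definition is_lp_metric_on :: "(int ^ 'n) set \<Rightarrow> (int ^ 'n \<Rightarrow> int ^ 'n \<Rightarrow> real) \<Rightarrow> bool" where
  "is_lp_metric_on X d \<longleftrightarrow>
     (\<exists>p::real. 1 \<le> p \<and> (\<forall>x\<in>X. \<forall>y\<in>X. d x y = lp_dist p x y)) \<or>
     (\<forall>x\<in>X. \<forall>y\<in>X. d x y = linf_dist x y)"

text \<open>The class Phi, on [0,infinity); "increasing" read as nondecreasing.\<close>
definition Phi_class :: "(real \<Rightarrow> real) \<Rightarrow> bool" where
  "Phi_class \<phi> \<longleftrightarrow> mono_on {0..} \<phi> \<and> (\<forall>t\<ge>0. \<phi> t \<ge> 0) \<and>
     (\<forall>t\<ge>0. \<phi> t = 0 \<longleftrightarrow> t = 0) \<and> (\<forall>t>0. \<phi> t < t)"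

definition alpha_admissible :: "'a set \<Rightarrow> ('a \<Rightarrow> 'a) \<Rightarrow> ('a \<Rightarrow> 'a \<Rightarrow> real) \<Rightarrow> bool" where
  "alpha_admissible X T \<alpha> \<longleftrightarrow> (\<forall>x\<in>X. \<forall>y\<in>X. \<alpha> x y \<ge> 1 \<longrightarrow> \<alpha> (T x) (T y) \<ge> 1)"

definition Mxy :: "('a \<Rightarrow> 'a \<Rightarrow> real) \<Rightarrow> ('a \<Rightarrow> 'a) \<Rightarrow> 'a \<Rightarrow> 'a \<Rightarrow> real" where
  "Mxy d T x y = Max {d x y, d x (T x), d y (T y), (d x (T y) + d y (T x)) / 2}"

end

theory Submission
  imports Defs
begin

text \<open>Along the Picard orbit of a point x0 with \<alpha>(x0, T x0) \<ge> 1, admissibility keeps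
  \<alpha> \<ge> 1 between consecutive points, and the contractive condition then forces the consecutive
  distances to decrease strictly as long as no fixed point is met. In a finite space, and for
  an \<ell>_p metric on a subset of Z^n, only finitely many distance values lie below any bound,
  so such a strictly decreasing sequence cannot exist. For fixed points u, v the quantity
  M(u, v) is d(u, v) itself, whence \<alpha>(u, v) \<ge> 1 forces d(u, v) = 0. Neither the adjacency
  relation nor the nonnegativity of \<alpha> plays any role.\<close>

lemma metric_onD:
  assumes "metric_on X d" "x \<in> X" "y \<in> X"
  shows "d x y \<ge> 0" "d x y = 0 \<longleftrightarrow> x = y" "d x y = d y x"
  using assms unfolding metric_on_def by blast+

lemma metric_on_triangle:
  assumes "metric_on X d" "x \<in> X" "y \<in> X" "z \<in> X"
  shows "d x z \<le> d x y + d y z"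
  using assms unfolding metric_on_def by blast

definition locally_finite_dist_values :: "'a set \<Rightarrow> ('a \<Rightarrow> 'a \<Rightarrow> real) \<Rightarrow> bool" where
  "locally_finite_dist_values X d \<longleftrightarrow>
     (\<forall>B. finite {d x y | x y. x \<in> X \<and> y \<in> X \<and> d x y \<le> B})"

lemma locally_finite_dist_values_if_finite:
  assumes "finite X"
  shows "locally_finite_dist_values X d"
  unfolding locally_finite_dist_values_def
proof
  fix B :: real
  have "{d x y | x y. x \<in> X \<and> y \<in> X \<and> d x y \<le> B} \<subseteq> case_prod d ` (X \<times> X)"
    by auto
  moreover have "finite (case_prod d ` (X \<times> X))"
    using assms by simp
  ultimately show "finite {d x y | x y. x \<in> X \<and> y \<in> X \<and> d x y \<le> B}"
    by (rule finite_subset)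
qed

lemma finite_int_vec_box: "finite {z :: int ^ 'n. \<forall>i. \<bar>z $ i\<bar> \<le> B}"
proof (rule finite_subset)
  show "{z :: int ^ 'n. \<forall>i. \<bar>z $ i\<bar> \<le> B} \<subseteq> vec_lambda ` PiE UNIV (\<lambda>_. {-B..B})"
  proof
    fix z :: "int ^ 'n"
    assume "z \<in> {z. \<forall>i. \<bar>z $ i\<bar> \<le> B}"
    then have "vec_nth z \<in> PiE UNIV (\<lambda>_. {-B..B})"
      by (auto simp: abs_le_iff) (metis minus_le_iff)
    then show "z \<in> vec_lambda ` PiE UNIV (\<lambda>_. {-B..B})"
      by (metis image_eqI vec_nth_inverse)
  qed
qed (intro finite_imageI finite_PiE; simp)

lemma locally_finite_dist_values_if_norm_dominates_coords:
  fixes X :: "(int ^ 'n) set" and N :: "int ^ 'n \<Rightarrow> real"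
  assumes dist_eq: "\<forall>x\<in>X. \<forall>y\<in>X. d x y = N (x - y)"
    and coord_le: "\<And>z i. \<bar>real_of_int (z $ i)\<bar> \<le> N z"
  shows "locally_finite_dist_values X d"
  unfolding locally_finite_dist_values_def
proof
  fix B :: real
  let ?box = "{z :: int ^ 'n. \<forall>i. \<bar>z $ i\<bar> \<le> \<lceil>B\<rceil>}"
  have "{d x y | x y. x \<in> X \<and> y \<in> X \<and> d x y \<le> B} \<subseteq> N ` ?box"
  proof clarify
    fix x y
    assume "x \<in> X" "y \<in> X" "d x y \<le> B"
    have "\<bar>(x - y) $ i\<bar> \<le> \<lceil>B\<rceil>" for i
    proof -
      have "real_of_int \<bar>(x - y) $ i\<bar> \<le> B"
        using dist_eq coord_le[of "x - y" i] \<open>x \<in> X\<close> \<open>y \<in> X\<close> \<open>d x y \<le> B\<close> by simp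
      then show ?thesis by (simp add: le_ceiling_iff)
    qed
    then have "x - y \<in> ?box" by simp
    then show "d x y \<in> N ` ?box" using dist_eq \<open>x \<in> X\<close> \<open>y \<in> X\<close> by auto
  qed
  then show "finite {d x y | x y. x \<in> X \<and> y \<in> X \<and> d x y \<le> B}"
    using finite_imageI[OF finite_int_vec_box] by (rule finite_subset)
qed

lemma abs_coord_le_lp_dist:
  assumes "p \<ge> 1"
  shows "\<bar>real_of_int (x $ i - y $ i)\<bar> \<le> lp_dist p x y"
proof -
  let ?a = "\<bar>real_of_int (x $ i - y $ i)\<bar>"
  have "?a = (?a powr p) powr (1 / p)"
    using assms by (simp add: powr_powr)
  also have "\<dots> \<le> (\<Sum>j\<in>UNIV. \<bar>real_of_int (x $ j - y $ j)\<bar> powr p) powr (1 / p)"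
    using assms by (intro powr_mono2 member_le_sum) auto
  finally show ?thesis unfolding lp_dist_def .
qed

lemma abs_coord_le_linf_dist: "\<bar>real_of_int (x $ i - y $ i)\<bar> \<le> linf_dist x y"
  unfolding linf_dist_def by (rule Max_ge) auto

lemma locally_finite_dist_values_if_lp_metric:
  assumes "is_lp_metric_on X d"
  shows "locally_finite_dist_values X d"
  using assms unfolding is_lp_metric_on_def
proof (elim disjE exE conjE)
  fix p :: real
  assume "1 \<le> p" "\<forall>x\<in>X. \<forall>y\<in>X. d x y = lp_dist p x y"
  then show ?thesis
    using abs_coord_le_lp_dist[of p _ _ 0]
    by (intro locally_finite_dist_values_if_norm_dominates_coords[where N = "\<lambda>z. lp_dist p z 0"])
      (auto simp: lp_dist_def)
next
  assume "\<forall>x\<in>X. \<forall>y\<in>X. d x y = linf_dist x y"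
  then show ?thesis
    using abs_coord_le_linf_dist[of _ _ 0]
    by (intro locally_finite_dist_values_if_norm_dominates_coords[where N = "\<lambda>z. linf_dist z 0"])
      (auto simp: linf_dist_def)
qed

locale alpha_psi_phi_contraction =
  fixes X :: "'a set" and d :: "'a \<Rightarrow> 'a \<Rightarrow> real" and T :: "'a \<Rightarrow> 'a"
    and \<alpha> :: "'a \<Rightarrow> 'a \<Rightarrow> real" and \<psi> \<phi> :: "real \<Rightarrow> real"
  assumes metric: "metric_on X d"
    and maps: "\<forall>x\<in>X. T x \<in> X"
    and admissible: "alpha_admissible X T \<alpha>"
    and psi: "Phi_class \<psi>" and phi: "Phi_class \<phi>"
    and contraction: "\<forall>x\<in>X. \<forall>y\<in>X.
      \<alpha> x y * \<psi> (d (T x) (T y)) \<le> \<psi> (Mxy d T x y) - \<phi> (Mxy d T x y)"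
begin

lemma image_dist_eq_0_if_Mxy_eq:
  assumes "x \<in> X" "y \<in> X" "\<alpha> x y \<ge> 1" "Mxy d T x y = d (T x) (T y)"
  shows "d (T x) (T y) = 0"
proof (rule ccontr)
  let ?t = "d (T x) (T y)"
  assume "?t \<noteq> 0"
  then have "?t > 0"
    using metric_onD(1)[OF metric, of "T x" "T y"] maps assms(1,2) by auto
  then have "\<psi> ?t \<ge> 0" "\<phi> ?t > 0"
    using psi phi unfolding Phi_class_def by (auto simp: less_eq_real_def)
  then have "\<psi> ?t \<le> \<alpha> x y * \<psi> ?t"
    using assms(3) by (simp add: mult_le_cancel_right1)
  also have "\<dots> \<le> \<psi> ?t - \<phi> ?t"
    using contraction[rule_format, OF assms(1,2)] assms(4) by simp
  finally show False using \<open>\<phi> ?t > 0\<close> by simp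
qed

lemma Mxy_orbit_step:
  assumes "x \<in> X"
  shows "Mxy d T x (T x) = max (d x (T x)) (d (T x) (T (T x)))"
proof -
  have X: "T x \<in> X" "T (T x) \<in> X" using assms maps by auto
  have "d x (T (T x)) \<le> d x (T x) + d (T x) (T (T x))"
    using metric_on_triangle[OF metric assms X] .
  moreover have "d (T x) (T x) = 0" using metric_onD(2)[OF metric X(1) X(1)] by simp
  ultimately show ?thesis unfolding Mxy_def by (simp add: max_def)
qed

lemma Mxy_fixed_points:
  assumes "u \<in> X" "v \<in> X" "T u = u" "T v = v"
  shows "Mxy d T u v = d u v"
proof -
  have "d u u = 0" "d v v = 0" "d v u = d u v" "d u v \<ge> 0"
    using assms(1,2) metric_onD[OF metric] by auto
  then show ?thesis using assms(3,4) unfolding Mxy_def by (simp add: max_def)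
qed

lemma fixed_point_unique:
  assumes "u \<in> X" "v \<in> X" "T u = u" "T v = v" "\<alpha> u v \<ge> 1"
  shows "u = v"
  using image_dist_eq_0_if_Mxy_eq[OF assms(1,2,5)] Mxy_fixed_points[OF assms(1-4)]
    metric_onD(2)[OF metric assms(1,2)] assms(3,4)
  by simp

lemma orbit_in_carrier: "a \<in> X \<Longrightarrow> (T ^^ n) a \<in> X"
  using maps by (induction n) auto

lemma alpha_orbit_step:
  assumes "a \<in> X" "\<alpha> a (T a) \<ge> 1"
  shows "\<alpha> ((T ^^ n) a) ((T ^^ Suc n) a) \<ge> 1"
proof (induction n)
  case 0
  then show ?case using assms(2) by simp
next
  case (Suc n)
  then show ?case
    using admissible maps orbit_in_carrier[OF assms(1)] unfolding alpha_admissible_def by simp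
qed

lemma orbit_step_dist_decreasing:
  assumes "a \<in> X" "\<alpha> a (T a) \<ge> 1" and no_fixed_point: "\<forall>x\<in>X. T x \<noteq> x"
  defines "D \<equiv> \<lambda>n. d ((T ^^ n) a) ((T ^^ Suc n) a)"
  shows "D (Suc n) < D n"
proof (rule ccontr)
  let ?x = "(T ^^ n) a"
  have x: "?x \<in> X" and Tx: "T ?x \<in> X"
    using orbit_in_carrier[OF assms(1)] maps by auto
  have D_pos: "D (Suc n) > 0"
    using metric_onD(1,2)[OF metric Tx] Tx maps no_fixed_point
    unfolding D_def by (metis funpow.simps(2) comp_apply less_eq_real_def)
  assume "\<not> D (Suc n) < D n"
  then have "Mxy d T ?x (T ?x) = d (T ?x) (T (T ?x))"
    using Mxy_orbit_step[OF x] unfolding D_def by simp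
  with image_dist_eq_0_if_Mxy_eq[OF x Tx] alpha_orbit_step[OF assms(1,2), of n]
  have "D (Suc n) = 0" unfolding D_def by simp
  with D_pos show False by simp
qed

lemma fixed_point_exists:
  assumes "locally_finite_dist_values X d" "a \<in> X" "\<alpha> a (T a) \<ge> 1"
  shows "\<exists>x\<in>X. T x = x"
proof (rule ccontr)
  assume "\<not> (\<exists>x\<in>X. T x = x)"
  define D where "D n = d ((T ^^ n) a) ((T ^^ Suc n) a)" for n
  have D_Suc_less: "D (Suc n) < D n" for n
    using orbit_step_dist_decreasing[OF assms(2,3)] \<open>\<not> (\<exists>x\<in>X. T x = x)\<close>
    unfolding D_def by blast
  then have "strict_mono (\<lambda>n. - D n)" by (simp add: strict_mono_Suc_iff)
  then have "inj (\<lambda>n. - D n)" by (rule strict_mono_imp_inj_on)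
  then have "inj D" by (simp add: inj_def)
  then have "infinite (range D)" by (rule range_inj_infinite)
  moreover have "D n \<le> D 0" for n
    by (induction n) (use D_Suc_less in \<open>auto intro: order.trans less_imp_le\<close>)
  then have "range D \<subseteq> {d x y | x y. x \<in> X \<and> y \<in> X \<and> d x y \<le> D 0}"
    using orbit_in_carrier[OF assms(2)] unfolding D_def by blast
  ultimately show False
    using assms(1) finite_subset unfolding locally_finite_dist_values_def by blast
qed

end

theorem theorem7p8:
  fixes X :: "(int ^ 'n) set"
    and d :: "int ^ 'n \<Rightarrow> int ^ 'n \<Rightarrow> real"
    and \<kappa> :: "int ^ 'n \<Rightarrow> int ^ 'n \<Rightarrow> bool"
    and T :: "int ^ 'n \<Rightarrow> int ^ 'n"
    and \<alpha> :: "int ^ 'n \<Rightarrow> int ^ 'n \<Rightarrow> real"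
    and \<psi> \<phi> :: "real \<Rightarrow> real"
  assumes dms: "digital_metric_space X d \<kappa>"
    and fin_or_lp: "finite X \<or> is_lp_metric_on X d"
    and T_maps: "\<forall>x\<in>X. T x \<in> X"
    and alpha_nonneg: "\<forall>x\<in>X. \<forall>y\<in>X. \<alpha> x y \<ge> 0"
    and adm: "alpha_admissible X T \<alpha>"
    and x0: "\<exists>x0\<in>X. \<alpha> x0 (T x0) \<ge> 1"
    and psi: "Phi_class \<psi>" and phi: "Phi_class \<phi>"
    and contr: "\<forall>x\<in>X. \<forall>y\<in>X.
        \<alpha> x y * \<psi> (d (T x) (T y)) \<le> \<psi> (Mxy d T x y) - \<phi> (Mxy d T x y)"
  shows "(\<exists>x\<in>X. T x = x) \<and>
         (\<forall>u\<in>X. \<forall>v\<in>X. T u = u \<longrightarrow> T v = v \<longrightarrow> \<alpha> u v \<ge> 1 \<longrightarrow> u = v)"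
proof -
  interpret alpha_psi_phi_contraction X d T \<alpha> \<psi> \<phi>
    using dms T_maps adm psi phi contr
    by unfold_locales (auto simp: digital_metric_space_def)
  have "locally_finite_dist_values X d"
    using fin_or_lp locally_finite_dist_values_if_finite locally_finite_dist_values_if_lp_metric
    by blast
  then show ?thesis
    using x0 fixed_point_exists fixed_point_unique by blast
qed

end
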